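(* Let $\theta:H\to H$ be an endomorphism and let $E$ be a proper hyperideal of $H$. If $E$ is an $n$-ary Endo-prime hyperideal associated with $\theta$, then $rad(E)$ is an $n$-ary Endo-prime hyperideal associated with $\theta$.
   Context: Throughout, $(H,h,k)$ is a commutative Krasner $(m,n)$-hyperring with scalar identity $1_H$: $(H,h)$ is a canonical $m$-ary hypergroup (a commutative associative $m$-ary hyperoperation $h:H^m\to\mathcal P^*(H)$ with a unique zero $0$ such that $h(u,0^{(m-1)})=\{u\}$, unique inverses $u^{-1}$ with $0\in h(u,u^{-1},0^{(m-2)})$, and the reversibility axiom), $k:H^n\to H$ is a commutative associative $n$-ary operation that distributes over $h$ in each argument, $k(0,u_2^n)=0$, and $k(u,1_H^{(n-1)})=u$ for all $u\in H$. Notation: $u_i^j$ denotes the sequence $u_i,\dots,u_j$ (empty if $j<i$); $u^{(t)}$ denotes $u$ repeated $t$ times; for $r=l(n-1)+1$, $k_{(l)}(u_1^r)=k(k(\cdots k(k(u_1^n),u_{n+1}^{2n-1})\cdots),u_{r-n+1}^{r})$ ($l$ nested applications of $k$). Operations are extended to subsets elementwise. A hyperideal of $H$ is a nonempty $I\subseteq H$ such that $(I,h)$ is an $m$-ary subhypergroup of $(H,h)$ and $k(u_1^{i-1},I,u_{i+1}^n)\subseteq I$ for all $u_j\in H$. An endomorphism of $H$ is a map $\theta:H\to H$ with $\theta(h(u_1^m))=h(\theta(u_1),\dots,\theta(u_m))$, $\theta(k(u_1^n))=k(\theta(u_1),\dots,\theta(u_n))$ and $\theta(1_H)=1_H$.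 "A power of $u$ lies in $E$" means $k(u^{(r)},1_H^{(n-r)})\in E$ for some $r\le n$, or $k_{(l)}(u^{(r)})\in E$ for some $r=l(n-1)+1>n$. A proper hyperideal $P$ is an $n$-ary prime hyperideal if $k(u_1^n)\in P$ ($u_i\in H$) implies $u_i\in P$ for some $i$. The radical $rad(E)$ is the intersection of all $n$-ary prime hyperideals containing $E$ ($rad(E)=H$ if there are none); equivalently $rad(E)=\{u\in H:\text{a power of }u\text{ lies in }E\}$. For an endomorphism $\theta$, a proper hyperideal $E$ of $H$ is an $n$-ary Endo-prime hyperideal associated with $\theta$ if for all $u_1,\dots,u_n\in H$, $k(u_1^n)\in E$ implies that for some $i\in\{1,\dots,n\}$, $u_i\in E$ or $\theta\big(k(u_1^{i-1},1_H,u_{i+1}^n)\big)\in E$. *)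

theory Defs
  imports Main "HOL-Library.Multiset"
begin

text \<open>A commutative Krasner (m,n)-hyperring with scalar identity, carried by the
whole type 'a.  The m-ary hyperoperation h and the n-ary operation k take
argument lists (of length m resp. n).\<close>

definition hset :: "('a list \<Rightarrow> 'a set) \<Rightarrow> 'a set list \<Rightarrow> 'a set" where
  "hset h As = \<Union> {h xs | xs. list_all2 (\<lambda>x A. x \<in> A) xs As}"

definition canonical_hypergroup ::
  "nat \<Rightarrow> ('a list \<Rightarrow> 'a set) \<Rightarrow> 'a \<Rightarrow> ('a \<Rightarrow> 'a) \<Rightarrow> bool" where
  "canonical_hypergroup m h zero iv \<longleftrightarrow>
     m \<ge> 2
   \<and> (\<forall>xs. length xs = m \<longrightarrow> h xs \<noteq> {})
   \<comment> \<open>associativity\<close>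
   \<and> (\<forall>xs i. length xs = 2*m - 1 \<and> i \<le> m - 1 \<longrightarrow>
        hset h (map (\<lambda>x. {x}) (take i xs) @ [h (take m (drop i xs))] @ map (\<lambda>x. {x}) (drop (i+m) xs))
      = hset h ([h (take m xs)] @ map (\<lambda>x. {x}) (drop m xs)))
   \<comment> \<open>commutativity\<close>
   \<and> (\<forall>xs ys. length xs = m \<and> mset xs = mset ys \<longrightarrow> h xs = h ys)
   \<comment> \<open>unique zero\<close>
   \<and> (\<forall>u. h (u # replicate (m-1) zero) = {u})
   \<and> (\<forall>e. (\<forall>u. h (u # replicate (m-1) e) = {u}) \<longrightarrow> e = zero)
   \<comment> \<open>unique inverses\<close>
   \<and> (\<forall>u. zero \<in> h (u # iv u # replicate (m-2) zero))
   \<and> (\<forall>u v. zero \<in> h (u # v # replicate (m-2) zero) \<longrightarrow> v = iv u)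
   \<comment> \<open>reversibility\<close>
   \<and> (\<forall>xs x i. length xs = m \<and> i < m \<and> x \<in> h xs \<longrightarrow>
        xs ! i \<in> h (map iv (take i xs) @ [x] @ map iv (drop (Suc i) xs)))"

definition krasner_hyperring ::
  "nat \<Rightarrow> nat \<Rightarrow> ('a list \<Rightarrow> 'a set) \<Rightarrow> ('a list \<Rightarrow> 'a) \<Rightarrow> 'a \<Rightarrow> ('a \<Rightarrow> 'a) \<Rightarrow> 'a \<Rightarrow> bool" where
  "krasner_hyperring m n h k zero iv one \<longleftrightarrow>
     canonical_hypergroup m h zero iv
   \<and> n \<ge> 2
   \<comment> \<open>associativity of k\<close>
   \<and> (\<forall>xs i. length xs = 2*n - 1 \<and> i \<le> n - 1 \<longrightarrow>
        k (take i xs @ [k (take n (drop i xs))] @ drop (i+n) xs) = k (k (take n xs) # drop n xs))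
   \<comment> \<open>commutativity of k\<close>
   \<and> (\<forall>xs ys. length xs = n \<and> mset xs = mset ys \<longrightarrow> k xs = k ys)
   \<comment> \<open>distributivity of k over h in each argument\<close>
   \<and> (\<forall>xs ys i. length xs = n \<and> length ys = m \<and> i < n \<longrightarrow>
        (\<lambda>y. k (xs[i := y])) ` h ys = h (map (\<lambda>y. k (xs[i := y])) ys))
   \<comment> \<open>zero is absorbing\<close>
   \<and> (\<forall>xs. length xs = n - 1 \<longrightarrow> k (zero # xs) = zero)
   \<comment> \<open>scalar identity\<close>
   \<and> (\<forall>u. k (u # replicate (n-1) one) = u)"

definition hyperideal ::
  "nat \<Rightarrow> nat \<Rightarrow> ('a list \<Rightarrow> 'a set) \<Rightarrow> ('a list \<Rightarrow> 'a) \<Rightarrow> ('a \<Rightarrow> 'a) \<Rightarrow> 'a set \<Rightarrow> bool" where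
  "hyperideal m n h k iv I \<longleftrightarrow>
     I \<noteq> {}
   \<and> (\<forall>xs. length xs = m \<and> set xs \<subseteq> I \<longrightarrow> h xs \<subseteq> I)
   \<and> (\<forall>x\<in>I. iv x \<in> I)
   \<and> (\<forall>xs i x. length xs = n \<and> i < n \<and> x \<in> I \<longrightarrow> k (xs[i := x]) \<in> I)"

definition endomorphism ::
  "nat \<Rightarrow> nat \<Rightarrow> ('a list \<Rightarrow> 'a set) \<Rightarrow> ('a list \<Rightarrow> 'a) \<Rightarrow> 'a \<Rightarrow> ('a \<Rightarrow> 'a) \<Rightarrow> bool" where
  "endomorphism m n h k one \<theta> \<longleftrightarrow>
     (\<forall>xs. length xs = m \<longrightarrow> \<theta> ` h xs = h (map \<theta> xs))
   \<and> (\<forall>xs. length xs = n \<longrightarrow> \<theta> (k xs) = k (map \<theta> xs))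
   \<and> \<theta> one = one"

definition nary_prime ::
  "nat \<Rightarrow> nat \<Rightarrow> ('a list \<Rightarrow> 'a set) \<Rightarrow> ('a list \<Rightarrow> 'a) \<Rightarrow> ('a \<Rightarrow> 'a) \<Rightarrow> 'a set \<Rightarrow> bool" where
  "nary_prime m n h k iv P \<longleftrightarrow>
     hyperideal m n h k iv P \<and> P \<noteq> UNIV
   \<and> (\<forall>xs. length xs = n \<and> k xs \<in> P \<longrightarrow> (\<exists>x\<in>set xs. x \<in> P))"

text \<open>Radical: intersection of all n-ary prime hyperideals containing E
  (the whole carrier if there are none, which is the empty intersection).\<close>
definition rad ::
  "nat \<Rightarrow> nat \<Rightarrow> ('a list \<Rightarrow> 'a set) \<Rightarrow> ('a list \<Rightarrow> 'a) \<Rightarrow> ('a \<Rightarrow> 'a) \<Rightarrow> 'a set \<Rightarrow> 'a set" where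
  "rad m n h k iv E = \<Inter> {P. nary_prime m n h k iv P \<and> E \<subseteq> P}"

definition endo_prime ::
  "nat \<Rightarrow> nat \<Rightarrow> ('a list \<Rightarrow> 'a set) \<Rightarrow> ('a list \<Rightarrow> 'a) \<Rightarrow> ('a \<Rightarrow> 'a) \<Rightarrow> 'a \<Rightarrow> ('a \<Rightarrow> 'a) \<Rightarrow> 'a set \<Rightarrow> bool" where
  "endo_prime m n h k iv one \<theta> E \<longleftrightarrow>
     hyperideal m n h k iv E \<and> E \<noteq> UNIV
   \<and> (\<forall>xs. length xs = n \<and> k xs \<in> E \<longrightarrow>
        (\<exists>i<n. xs ! i \<in> E \<or> \<theta> (k (xs[i := one])) \<in> E))"

end

theory Submission
  imports Defs
begin

(* Filling the unused arguments with 1_H turns k into a commutative monoid product mul, and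
   k(x_1,...,x_n) is the product of the x_i.  As for commutative rings, rad E is the set of
   elements having a power in E; the nontrivial inclusion is Krull's argument: a hyperideal
   maximal among those containing E and avoiding the powers of x is prime, because its colon
   hyperideals (M : s) are again hyperideals.  If now k(x_1,...,x_n) lies in rad E, then some
   power k(x_1^r,...,x_n^r) lies in E, and the Endo-prime property of E gives x_i^r in E or
   theta(k(x_1^r,...,1_H,...,x_n^r)) = theta(k(x_1,...,1_H,...,x_n))^r in E. *)

locale comm_krasner_hyperring =
  fixes m n :: nat and h :: "'a list \<Rightarrow> 'a set" and k :: "'a list \<Rightarrow> 'a"
    and zero one :: 'a and iv :: "'a \<Rightarrow> 'a"
  assumes krasner_hyperring: "krasner_hyperring m n h k zero iv one"
begin

lemma hyperidealI:
  assumes "P \<noteq> {}"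
    and "\<And>xs. length xs = m \<Longrightarrow> set xs \<subseteq> P \<Longrightarrow> h xs \<subseteq> P"
    and "\<And>x. x \<in> P \<Longrightarrow> iv x \<in> P"
    and "\<And>xs i x. length xs = n \<Longrightarrow> i < n \<Longrightarrow> x \<in> P \<Longrightarrow> k (xs[i := x]) \<in> P"
  shows "hyperideal m n h k iv P"
  using assms unfolding hyperideal_def by blast

lemma hyperideal_h: "hyperideal m n h k iv P \<Longrightarrow> length xs = m \<Longrightarrow> set xs \<subseteq> P \<Longrightarrow> h xs \<subseteq> P"
  and hyperideal_iv: "hyperideal m n h k iv P \<Longrightarrow> x \<in> P \<Longrightarrow> iv x \<in> P"
  and hyperideal_k: "hyperideal m n h k iv P \<Longrightarrow> length xs = n \<Longrightarrow> i < n \<Longrightarrow> x \<in> P \<Longrightarrow> k (xs[i := x]) \<in> P"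
  unfolding hyperideal_def by blast+

lemma h_arity_ge_2: "2 \<le> m"
  and k_arity_ge_2: "2 \<le> n"
  using krasner_hyperring by (simp_all add: krasner_hyperring_def canonical_hypergroup_def)

lemma k_assoc:
  "length xs = 2 * n - 1 \<Longrightarrow> i \<le> n - 1 \<Longrightarrow>
   k (take i xs @ [k (take n (drop i xs))] @ drop (i + n) xs) = k (k (take n xs) # drop n xs)"
  using krasner_hyperring unfolding krasner_hyperring_def by blast

lemma k_commute: "length xs = n \<Longrightarrow> mset xs = mset ys \<Longrightarrow> k xs = k ys"
  using krasner_hyperring unfolding krasner_hyperring_def by blast

lemma k_distrib:
  "length xs = n \<Longrightarrow> length ys = m \<Longrightarrow> i < n \<Longrightarrow>
   (\<lambda>y. k (xs[i := y])) ` h ys = h (map (\<lambda>y. k (xs[i := y])) ys)"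
  using krasner_hyperring unfolding krasner_hyperring_def by blast

lemma k_zero: "length xs = n - 1 \<Longrightarrow> k (zero # xs) = zero"
  using krasner_hyperring unfolding krasner_hyperring_def by blast

lemma k_one: "k (u # replicate (n - 1) one) = u"
  using krasner_hyperring unfolding krasner_hyperring_def by blast

lemma zero_mem_h_inverse: "zero \<in> h (u # iv u # replicate (m - 2) zero)"
  using krasner_hyperring unfolding krasner_hyperring_def canonical_hypergroup_def by simp

lemma inverse_unique:
  assumes "zero \<in> h (u # v # replicate (m - 2) zero)"
  shows "v = iv u"
proof -
  have "\<forall>u v. zero \<in> h (u # v # replicate (m - 2) zero) \<longrightarrow> v = iv u"
    using krasner_hyperring unfolding krasner_hyperring_def canonical_hypergroup_def
    by (elim conjE) assumption
  with assms show ?thesis by blast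
qed

definition mul :: "'a \<Rightarrow> 'a \<Rightarrow> 'a" where
  "mul a b = k (a # b # replicate (n - 2) one)"

lemma n_eq_Suc_Suc: obtains p where "n = Suc (Suc p)"
  using k_arity_ge_2 by (metis add_2_eq_Suc le_Suc_ex)

lemma mul_commute: "mul a b = mul b a"
  unfolding mul_def by (rule k_commute) (use k_arity_ge_2 in auto)

lemma mul_one: "mul a one = a"
proof -
  obtain p where n: "n = Suc (Suc p)" by (rule n_eq_Suc_Suc)
  show ?thesis unfolding mul_def using k_one[of a] by (simp add: n)
qed

lemma k_Cons: "length ys = n - 1 \<Longrightarrow> k (x # ys) = mul x (k (ys @ [one]))"
proof -
  assume ys: "length ys = n - 1"
  obtain p where n: "n = Suc (Suc p)" by (rule n_eq_Suc_Suc)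
  define xs where "xs = x # ys @ replicate (n - 1) one"
  have "mul x (k (ys @ [one])) = k (take 1 xs @ [k (take n (drop 1 xs))] @ drop (1 + n) xs)"
    unfolding mul_def using ys by (simp add: xs_def n)
  also have "\<dots> = k (k (take n xs) # drop n xs)"
    by (rule k_assoc) (use ys n in \<open>auto simp: xs_def\<close>)
  also have "\<dots> = k (x # ys)"
    using ys k_one[of "k (x # ys)"] by (simp add: xs_def n)
  finally show ?thesis ..
qed

lemma mul_assoc: "mul (mul a b) c = mul a (mul b c)"
proof -
  obtain p where n: "n = Suc (Suc p)" by (rule n_eq_Suc_Suc)
  define xs where "xs = a # b # replicate (n - 2) one @ c # replicate (n - 2) one"
  have "k (b # replicate (n - 2) one @ [c]) = mul b c"
    unfolding mul_def by (rule k_commute) (simp_all add: n)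
  then have "mul a (mul b c) = k (take 1 xs @ [k (take n (drop 1 xs))] @ drop (1 + n) xs)"
    unfolding mul_def by (simp add: xs_def n)
  also have "\<dots> = k (k (take n xs) # drop n xs)"
    by (rule k_assoc) (simp_all add: xs_def n)
  also have "\<dots> = mul (mul a b) c"
    unfolding mul_def by (simp add: xs_def n)
  finally show ?thesis ..
qed

sublocale mul: comm_monoid_list mul one
  by unfold_locales (rule mul_assoc mul_commute mul_one trans[OF mul_commute mul_one])+

lemma k_padded_eq_prod: "length xs \<le> n \<Longrightarrow> k (xs @ replicate (n - length xs) one) = mul.F xs"
proof (induction xs)
  case Nil
  obtain p where n: "n = Suc (Suc p)" by (rule n_eq_Suc_Suc)
  have "k (replicate n one) = one" using k_one[of one] by (simp add: n)
  then show ?case by simp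
next
  case (Cons x xs)
  then have "k ((x # xs) @ replicate (n - length (x # xs)) one)
      = mul x (k (xs @ replicate (n - Suc (length xs)) one @ [one]))"
    by (simp add: k_Cons)
  also have "\<dots> = mul x (mul.F xs)"
    using Cons by (simp add: replicate_append_same Suc_diff_Suc flip: replicate_Suc)
  finally show ?case by simp
qed

lemma k_eq_prod: "length xs = n \<Longrightarrow> k xs = mul.F xs"
  using k_padded_eq_prod[of xs] by simp

lemma prod_update_mul:
  "i < length xs \<Longrightarrow> mul.F (xs[i := mul s y]) = mul s (mul.F (xs[i := y]))"
proof (induction xs arbitrary: i)
  case (Cons x xs)
  then show ?case by (cases i) (simp_all add: mul.assoc mul.left_commute)
qed simp

lemma k_update_mul: "length xs = n \<Longrightarrow> i < n \<Longrightarrow> k (xs[i := mul s y]) = mul s (k (xs[i := y]))"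
  by (simp add: k_eq_prod prod_update_mul)

lemma mul_zero: "mul s zero = zero"
proof -
  have "mul s zero = k (zero # s # replicate (n - 2) one)"
    using mul.commute[of s zero] by (simp add: mul_def)
  also have "\<dots> = zero"
    by (rule k_zero) (use k_arity_ge_2 in simp)
  finally show ?thesis .
qed

lemma mul_image_h: "length ys = m \<Longrightarrow> mul s ` h ys = h (map (mul s) ys)"
proof -
  assume ys: "length ys = m"
  have "mul s = (\<lambda>y. k ((s # s # replicate (n - 2) one)[1 := y]))"
    by (simp add: fun_eq_iff mul_def)
  then show ?thesis
    using k_distrib[OF _ ys, of "s # s # replicate (n - 2) one" 1] k_arity_ge_2 by simp
qed

lemma mul_inverse: "mul s (iv y) = iv (mul s y)"
proof (rule inverse_unique)
  let ?ys = "y # iv y # replicate (m - 2) zero"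
  have "length ?ys = m" using h_arity_ge_2 by simp
  then have "mul s ` h ?ys = h (map (mul s) ?ys)" by (rule mul_image_h)
  moreover have "zero \<in> h ?ys" by (rule zero_mem_h_inverse)
  ultimately have "mul s zero \<in> h (map (mul s) ?ys)" by blast
  then show "zero \<in> h (mul s y # mul s (iv y) # replicate (m - 2) zero)"
    by (simp add: mul_zero)
qed

lemma hyperideal_mul:
  assumes P: "hyperideal m n h k iv P" and p: "p \<in> P"
  shows "mul a p \<in> P"
proof -
  have "k ((a # a # replicate (n - 2) one)[1 := p]) \<in> P"
    by (rule hyperideal_k[OF P _ _ p]) (use k_arity_ge_2 in simp_all)
  then show ?thesis by (simp add: mul_def)
qed

lemma zero_mem_hyperideal: "hyperideal m n h k iv P \<Longrightarrow> zero \<in> P"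
  using hyperideal_mul[of P _ zero] mul.commute[of zero] mul_zero
  unfolding hyperideal_def by (metis ex_in_conv)

lemma hyperideal_eq_UNIV_iff: "hyperideal m n h k iv P \<Longrightarrow> P = UNIV \<longleftrightarrow> one \<in> P"
  using hyperideal_mul[of P one] by (metis UNIV_I UNIV_eq_I mul_one)

lemma hyperideal_Inter:
  assumes "\<And>P. P \<in> F \<Longrightarrow> hyperideal m n h k iv P"
  shows "hyperideal m n h k iv (\<Inter>F)"
proof (rule hyperidealI)
  show "\<Inter>F \<noteq> {}" using assms zero_mem_hyperideal by blast
  show "h xs \<subseteq> \<Inter>F" if "length xs = m" "set xs \<subseteq> \<Inter>F" for xs
    using assms hyperideal_h[OF _ that(1)] that(2) by (meson Inf_greatest le_Inf_iff)
qed (use assms hyperideal_iv hyperideal_k in blast)+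

lemma hyperideal_Union_chain:
  assumes "C \<noteq> {}" and C: "subset.chain {I. hyperideal m n h k iv I} C"
  shows "hyperideal m n h k iv (\<Union>C)"
proof -
  have hyp: "hyperideal m n h k iv I" if "I \<in> C" for I
    using C that unfolding subset.chain_def by blast
  show ?thesis
  proof (rule hyperidealI)
    show "\<Union>C \<noteq> {}" using \<open>C \<noteq> {}\<close> hyp zero_mem_hyperideal by blast
    show "h xs \<subseteq> \<Union>C" if "length xs = m" "set xs \<subseteq> \<Union>C" for xs
    proof -
      obtain I where "I \<in> C" "set xs \<subseteq> I"
        using finite_subset_Union_chain[OF _ \<open>set xs \<subseteq> \<Union>C\<close> \<open>C \<noteq> {}\<close> C] by blast
      with hyp hyperideal_h that(1) show ?thesis by blast
    qed
  qed (use hyp hyperideal_iv hyperideal_k in blast)+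
qed

definition colon :: "'a set \<Rightarrow> 'a \<Rightarrow> 'a set" where
  "colon P s = {y. mul s y \<in> P}"

lemma subset_colon: "hyperideal m n h k iv P \<Longrightarrow> P \<subseteq> colon P s"
  by (auto simp: colon_def hyperideal_mul)

lemma hyperideal_colon:
  assumes P: "hyperideal m n h k iv P"
  shows "hyperideal m n h k iv (colon P s)"
proof (rule hyperidealI)
  show "colon P s \<noteq> {}"
    using subset_colon[OF P] zero_mem_hyperideal[OF P] by blast
  show "h xs \<subseteq> colon P s" if "length xs = m" "set xs \<subseteq> colon P s" for xs
  proof -
    have "h (map (mul s) xs) \<subseteq> P"
      using hyperideal_h[OF P, of "map (mul s) xs"] that by (auto simp: colon_def)
    then show ?thesis using mul_image_h[OF that(1)] by (auto simp: colon_def)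
  qed
  show "iv y \<in> colon P s" if "y \<in> colon P s" for y
    using hyperideal_iv[OF P] that by (simp add: colon_def mul_inverse)
  show "k (xs[i := y]) \<in> colon P s" if "length xs = n" "i < n" "y \<in> colon P s" for xs i y
    using hyperideal_k[OF P] that by (simp add: colon_def flip: k_update_mul)
qed

lemma prod_mem_imp_factor_mem:
  assumes "one \<notin> P" and "\<And>a b. mul a b \<in> P \<Longrightarrow> a \<in> P \<or> b \<in> P"
  shows "mul.F xs \<in> P \<Longrightarrow> \<exists>x\<in>set xs. x \<in> P"
  by (induction xs) (use assms in auto)

lemma nary_prime_iff_mul:
  "nary_prime m n h k iv P \<longleftrightarrow>
     hyperideal m n h k iv P \<and> one \<notin> P \<and> (\<forall>a b. mul a b \<in> P \<longrightarrow> a \<in> P \<or> b \<in> P)"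
proof
  assume P: "nary_prime m n h k iv P"
  then have hyp: "hyperideal m n h k iv P" and one: "one \<notin> P"
    using hyperideal_eq_UNIV_iff unfolding nary_prime_def by blast+
  have "a \<in> P \<or> b \<in> P" if ab: "mul a b \<in> P" for a b
  proof -
    have "length (a # b # replicate (n - 2) one) = n" using k_arity_ge_2 by simp
    then obtain x where "x \<in> set (a # b # replicate (n - 2) one)" "x \<in> P"
      using P ab unfolding nary_prime_def mul_def by blast
    with one show ?thesis by (auto split: if_splits)
  qed
  with hyp one show "hyperideal m n h k iv P \<and> one \<notin> P \<and> (\<forall>a b. mul a b \<in> P \<longrightarrow> a \<in> P \<or> b \<in> P)"
    by blast
next
  assume "hyperideal m n h k iv P \<and> one \<notin> P \<and> (\<forall>a b. mul a b \<in> P \<longrightarrow> a \<in> P \<or> b \<in> P)"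
  then show "nary_prime m n h k iv P"
    using prod_mem_imp_factor_mem[of P] unfolding nary_prime_def by (auto simp: k_eq_prod)
qed

(* Agrees with the paper's powers k(u^(r), 1_H^(n-r)) and k_(l)(u^(r)) by k_eq_prod. *)
definition pow :: "'a \<Rightarrow> nat \<Rightarrow> 'a" where
  "pow x r = mul.F (replicate r x)"

lemma pow_0 [simp]: "pow x 0 = one"
  and pow_Suc [simp]: "pow x (Suc r) = mul x (pow x r)"
  by (simp_all add: pow_def)

lemma pow_add: "pow x (r + q) = mul (pow x r) (pow x q)"
  by (simp add: pow_def replicate_add)

lemma pow_one [simp]: "pow one r = one"
  by (induction r) simp_all

lemma pow_mul_distrib: "pow (mul a b) r = mul (pow a r) (pow b r)"
  by (induction r) (simp_all add: mul.assoc mul.left_commute)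

lemma pow_prod: "pow (mul.F xs) r = mul.F (map (\<lambda>x. pow x r) xs)"
  by (induction xs) (simp_all add: pow_mul_distrib)

lemma pow_k: "length xs = n \<Longrightarrow> pow (k xs) r = k (map (\<lambda>x. pow x r) xs)"
  by (simp add: k_eq_prod pow_prod)

lemma nary_prime_pow_mem: "nary_prime m n h k iv P \<Longrightarrow> pow x r \<in> P \<Longrightarrow> x \<in> P"
  by (induction r) (auto simp: nary_prime_iff_mul)

lemma nary_prime_if_maximal_disjoint:
  assumes M: "hyperideal m n h k iv M" and disjoint: "M \<inter> S = {}" and "one \<in> S"
    and S_mul: "\<And>a b. a \<in> S \<Longrightarrow> b \<in> S \<Longrightarrow> mul a b \<in> S"
    and maximal: "\<And>I. hyperideal m n h k iv I \<Longrightarrow> M \<subseteq> I \<Longrightarrow> I \<inter> S = {} \<Longrightarrow> I = M"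
  shows "nary_prime m n h k iv M"
  unfolding nary_prime_iff_mul
proof (intro conjI allI impI M)
  show "one \<notin> M" using disjoint \<open>one \<in> S\<close> by blast
  fix a b
  assume ab: "mul a b \<in> M"
  show "a \<in> M \<or> b \<in> M"
  proof (rule ccontr)
    assume "\<not> (a \<in> M \<or> b \<in> M)"
    then have "a \<notin> M" "b \<notin> M" by auto
    have "a \<in> colon M b" using ab by (simp add: colon_def mul.commute)
    then have "colon M b \<inter> S \<noteq> {}"
      using maximal[OF hyperideal_colon[OF M] subset_colon[OF M]] \<open>a \<notin> M\<close> by blast
    then obtain s where "s \<in> S" and bs: "mul b s \<in> M" by (auto simp: colon_def)
    have "colon M s \<inter> S = {}"
      using S_mul[OF \<open>s \<in> S\<close>] disjoint by (auto simp: colon_def)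
    then have "colon M s = M"
      using maximal[OF hyperideal_colon[OF M] subset_colon[OF M]] by blast
    moreover have "b \<in> colon M s" using bs by (simp add: colon_def mul.commute)
    ultimately show False using \<open>b \<notin> M\<close> by blast
  qed
qed

lemma exists_nary_prime_disjoint:
  assumes E: "hyperideal m n h k iv E" and "E \<inter> S = {}" and "one \<in> S"
    and S_mul: "\<And>a b. a \<in> S \<Longrightarrow> b \<in> S \<Longrightarrow> mul a b \<in> S"
  shows "\<exists>P. nary_prime m n h k iv P \<and> E \<subseteq> P \<and> P \<inter> S = {}"
proof -
  define A where "A = {I. hyperideal m n h k iv I \<and> E \<subseteq> I \<and> I \<inter> S = {}}"
  have "\<exists>M\<in>A. \<forall>I\<in>A. M \<subseteq> I \<longrightarrow> I = M"
  proof (rule subset_Zorn_nonempty)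
    show "A \<noteq> {}" using E \<open>E \<inter> S = {}\<close> by (auto simp: A_def)
    show "\<Union>C \<in> A" if "C \<noteq> {}" and C: "subset.chain A C" for C
    proof -
      have "subset.chain {I. hyperideal m n h k iv I} C"
        using C unfolding subset.chain_def A_def by blast
      then have "hyperideal m n h k iv (\<Union>C)" by (rule hyperideal_Union_chain[OF \<open>C \<noteq> {}\<close>])
      with C \<open>C \<noteq> {}\<close> show ?thesis unfolding subset.chain_def A_def by blast
    qed
  qed
  then obtain M where M: "M \<in> A" and maximal: "\<And>I. I \<in> A \<Longrightarrow> M \<subseteq> I \<Longrightarrow> I = M" by blast
  have "nary_prime m n h k iv M"
  proof (rule nary_prime_if_maximal_disjoint[OF _ _ \<open>one \<in> S\<close> S_mul])
    show "I = M" if "hyperideal m n h k iv I" "M \<subseteq> I" "I \<inter> S = {}" for I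
      by (rule maximal) (use that M in \<open>auto simp: A_def\<close>)
  qed (use M in \<open>auto simp: A_def\<close>)
  with M show ?thesis by (auto simp: A_def)
qed

lemma rad_eq_powers:
  assumes E: "hyperideal m n h k iv E"
  shows "rad m n h k iv E = {x. \<exists>r. pow x r \<in> E}"
proof (intro equalityI subsetI CollectI)
  fix x
  assume x: "x \<in> rad m n h k iv E"
  show "\<exists>r. pow x r \<in> E"
  proof (rule ccontr)
    assume "\<nexists>r. pow x r \<in> E"
    then have "E \<inter> range (pow x) = {}" by blast
    moreover have "one \<in> range (pow x)" by (rule range_eqI[of _ _ 0]) simp
    moreover have "mul a b \<in> range (pow x)" if "a \<in> range (pow x)" "b \<in> range (pow x)" for a b
      using that by (auto simp flip: pow_add)
    ultimately obtain P where "nary_prime m n h k iv P" "E \<subseteq> P" "P \<inter> range (pow x) = {}"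
      using exists_nary_prime_disjoint[OF E] by blast
    moreover have "x = pow x 1" by (simp add: mul.comm_neutral)
    ultimately show False using x unfolding rad_def by blast
  qed
next
  fix x
  assume "x \<in> {x. \<exists>r. pow x r \<in> E}"
  then show "x \<in> rad m n h k iv E"
    unfolding rad_def using nary_prime_pow_mem by blast
qed

lemma hyperideal_rad: "hyperideal m n h k iv (rad m n h k iv E)"
  unfolding rad_def nary_prime_def by (rule hyperideal_Inter) blast

lemma rad_neq_UNIV:
  assumes "hyperideal m n h k iv E" and "E \<noteq> UNIV"
  shows "rad m n h k iv E \<noteq> UNIV"
proof -
  have "one \<notin> rad m n h k iv E"
    using assms by (simp add: rad_eq_powers hyperideal_eq_UNIV_iff)
  then show ?thesis by blast
qed

lemma endomorphism_pow:
  assumes "endomorphism m n h k one \<theta>"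
  shows "\<theta> (pow x r) = pow (\<theta> x) r"
proof -
  have "\<theta> (mul a b) = mul (\<theta> a) (\<theta> b)" for a b
    using assms k_arity_ge_2 unfolding endomorphism_def mul_def by simp
  then show ?thesis using assms unfolding endomorphism_def by (induction r) simp_all
qed

lemma endo_prime_rad:
  assumes \<theta>: "endomorphism m n h k one \<theta>" and E: "endo_prime m n h k iv one \<theta> E"
  shows "endo_prime m n h k iv one \<theta> (rad m n h k iv E)"
proof -
  have hyp: "hyperideal m n h k iv E" and proper: "E \<noteq> UNIV"
    using E unfolding endo_prime_def by blast+
  have "\<exists>i<n. xs ! i \<in> rad m n h k iv E \<or> \<theta> (k (xs[i := one])) \<in> rad m n h k iv E"
    if xs: "length xs = n" and "k xs \<in> rad m n h k iv E" for xs
  proof -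
    obtain r where "pow (k xs) r \<in> E"
      using \<open>k xs \<in> rad m n h k iv E\<close> rad_eq_powers[OF hyp] by blast
    define ys where "ys = map (\<lambda>x. pow x r) xs"
    have "k ys \<in> E" using \<open>pow (k xs) r \<in> E\<close> by (simp add: ys_def pow_k xs)
    moreover have "length ys = n" using xs by (simp add: ys_def)
    ultimately obtain i where "i < n" and "ys ! i \<in> E \<or> \<theta> (k (ys[i := one])) \<in> E"
      using E unfolding endo_prime_def by blast
    moreover have "ys ! i = pow (xs ! i) r" using \<open>i < n\<close> xs by (simp add: ys_def)
    moreover have "\<theta> (k (ys[i := one])) = pow (\<theta> (k (xs[i := one]))) r"
    proof -
      have "ys[i := one] = map (\<lambda>x. pow x r) (xs[i := one])"
        by (simp add: ys_def map_update)
      then have "k (ys[i := one]) = pow (k (xs[i := one])) r"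
        using xs by (simp add: pow_k)
      then show ?thesis by (simp add: endomorphism_pow[OF \<theta>])
    qed
    ultimately show ?thesis
      unfolding rad_eq_powers[OF hyp] by auto
  qed
  then show ?thesis
    unfolding endo_prime_def using hyperideal_rad rad_neq_UNIV[OF hyp proper] by blast
qed

end

theorem mainTheorem1:
  fixes m n :: nat and h :: "'a list \<Rightarrow> 'a set" and k :: "'a list \<Rightarrow> 'a"
    and zero one :: 'a and iv \<theta> :: "'a \<Rightarrow> 'a" and E :: "'a set"
  assumes "krasner_hyperring m n h k zero iv one"
    and "endomorphism m n h k one \<theta>"
    and "hyperideal m n h k iv E" and "E \<noteq> UNIV"
    and "endo_prime m n h k iv one \<theta> E"
  shows "endo_prime m n h k iv one \<theta> (rad m n h k iv E)"
proof -
  interpret comm_krasner_hyperring m n h k zero one iv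
    by (rule comm_krasner_hyperring.intro) (fact assms(1))
  (* assms(3,4) are unused: endo_prime already includes that E is a proper hyperideal. *)
  show ?thesis by (rule endo_prime_rad[OF assms(2,5)])
qed

end
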